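(* Let $X,Y$ be metric spaces, $X\times Y$ with the maximum metric, $\Delta$ a scale and $g,h$ Hausdorff functions. If $E\subseteq X\times Y$ is compact, then the mapping $x\mapsto\underline{\mathcal B}^g_0(E_x)$ is Borel measurable on $X$ and $$\mathcal P^{gh}_{\Delta,0}(E)\ge\int\underline{\mathcal B}^{g}_0(E_x)\,d\mathcal P^{h}_{\Delta}(x).$$
   Context: In a metric space $(X,d)$: $\operatorname{gap}F=\inf\{d(x,y):x,y\in F,x\neq y\}$, $C_\delta(E)=\sup\{|F|:F\subseteq E,\operatorname{gap}F>\delta\}$. A Hausdorff function is a nondecreasing $g:(0,\infty)\to(0,\infty)$ (no continuity assumed); $gh$ is the pointwise product. A scale is a set $\Delta\subseteq(0,\infty)$ with $0$ in its closure. A packing is a family $\pi=\{(x_i,r_i):i\in I\}\subseteq X\times(0,\infty)$ with $d(x_i,x_j)>r_i$ for $i\ne j$; it is a packing of $E$ if all $x_i\in E$, $\Delta$-valued if all $r_i\in\Delta$, $\delta$-fine if all $r_i\le\delta$; $g(\pi)=\sum_ig(r_i)$. $\mathcal P^g_{\Delta,0}(E)=\inf_{\delta>0}\sup\{g(\pi):\pi$ a $\Delta$-valued $\delta$-fine packing of $E\}$; $\mathcal P^g_\Delta(E)=\inf\{\sum_n\mathcal P^g_{\Delta,0}(E_n):E\subseteq\bigcup_nE_n\}$ (countable covers), a Borel measure when restricted to Borel sets; $\underline{\mathcal B}^g_0(E)=\liminf_{\delta\to0}C_\delta(E)g(\delta)$. $E_x=\{y\in Y:(x,y)\in E\}$.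 *)

theory Defs
  imports "HOL-Analysis.Analysis"
begin

text \<open>All notions are parametrised by a distance function d, so that the
same definitions serve for X, Y (with their metric dist) and for X \<times> Y
with the maximum metric.\<close>

definition hausdorff_function :: "(real \<Rightarrow> real) \<Rightarrow> bool" where
  "hausdorff_function g \<longleftrightarrow> mono_on {0<..} g \<and> (\<forall>r>0. g r > 0)"

definition scale :: "real set \<Rightarrow> bool" where
  "scale \<Delta> \<longleftrightarrow> \<Delta> \<subseteq> {0<..} \<and> 0 \<in> closure \<Delta>"

definition max_dist :: "('a::metric_space \<times> 'b::metric_space) \<Rightarrow> ('a \<times> 'b) \<Rightarrow> real" where
  "max_dist p q = max (dist (fst p) (fst q)) (dist (snd p) (snd q))"

text \<open>gap F = inf of distances of distinct points (inf of empty set = \<infinity>).\<close>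
definition gap :: "('x \<Rightarrow> 'x \<Rightarrow> real) \<Rightarrow> 'x set \<Rightarrow> ennreal" where
  "gap d F = (INF p \<in> {(x, y). x \<in> F \<and> y \<in> F \<and> x \<noteq> y}. ennreal (d (fst p) (snd p)))"

definition cap :: "('x \<Rightarrow> 'x \<Rightarrow> real) \<Rightarrow> real \<Rightarrow> 'x set \<Rightarrow> ennreal" where
  "cap d \<delta> E = (SUP F \<in> {F. F \<subseteq> E \<and> gap d F > ennreal \<delta>}.
                   (if finite F then of_nat (card F) else top))"

definition lower_box0 :: "('x \<Rightarrow> 'x \<Rightarrow> real) \<Rightarrow> (real \<Rightarrow> real) \<Rightarrow> 'x set \<Rightarrow> ennreal" where
  "lower_box0 d g E = Liminf (at_right 0) (\<lambda>\<delta>. cap d \<delta> E * ennreal (g \<delta>))"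

text \<open>A packing, as a set of pairs (x_i, r_i) (the centres of a packing are
necessarily distinct, so an indexed family is the same as its set of pairs).\<close>
definition packing :: "('x \<Rightarrow> 'x \<Rightarrow> real) \<Rightarrow> ('x \<times> real) set \<Rightarrow> bool" where
  "packing d \<pi> \<longleftrightarrow> (\<forall>p\<in>\<pi>. snd p > 0) \<and>
     (\<forall>p\<in>\<pi>. \<forall>q\<in>\<pi>. p \<noteq> q \<longrightarrow> d (fst p) (fst q) > snd p)"

definition fine_packing_of ::
  "('x \<Rightarrow> 'x \<Rightarrow> real) \<Rightarrow> real set \<Rightarrow> real \<Rightarrow> 'x set \<Rightarrow> ('x \<times> real) set \<Rightarrow> bool" where
  "fine_packing_of d \<Delta> \<delta> E \<pi> \<longleftrightarrow> packing d \<pi> \<and> fst ` \<pi> \<subseteq> E \<and> snd ` \<pi> \<subseteq> \<Delta> \<and>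
     (\<forall>p\<in>\<pi>. snd p \<le> \<delta>)"

definition gsum :: "(real \<Rightarrow> real) \<Rightarrow> ('x \<times> real) set \<Rightarrow> ennreal" where
  "gsum g \<pi> = (SUP F \<in> {F. finite F \<and> F \<subseteq> \<pi>}. \<Sum>p\<in>F. ennreal (g (snd p)))"

definition pre_packing :: "('x \<Rightarrow> 'x \<Rightarrow> real) \<Rightarrow> real set \<Rightarrow> (real \<Rightarrow> real) \<Rightarrow> 'x set \<Rightarrow> ennreal" where
  "pre_packing d \<Delta> g E =
     (INF \<delta> \<in> {0<..}. SUP \<pi> \<in> {\<pi>. fine_packing_of d \<Delta> \<delta> E \<pi>}. gsum g \<pi>)"

definition packing_outer :: "('x \<Rightarrow> 'x \<Rightarrow> real) \<Rightarrow> real set \<Rightarrow> (real \<Rightarrow> real) \<Rightarrow> 'x set \<Rightarrow> ennreal" where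
  "packing_outer d \<Delta> g E =
     (INF En \<in> {En :: nat \<Rightarrow> 'x set. E \<subseteq> (\<Union>n. En n)}. \<Sum>n. pre_packing d \<Delta> g (En n))"

definition packing_measure :: "real set \<Rightarrow> (real \<Rightarrow> real) \<Rightarrow> 'a::metric_space measure" where
  "packing_measure \<Delta> g = measure_of UNIV (sets borel) (packing_outer dist \<Delta> g)"

end

theory Submission
  imports Defs
begin

text \<open>
  Given a packing of X and, for each of its balls B(x, r), a subset of the fibre E_x whose gap
  exceeds r, the balls of radius r centred at the corresponding points of E form a packing of E
  in the maximum metric. Hence the packing premeasure on X with the centre-dependent weight
  C_r(E_x) g(r) h(r) is at most P^gh_{\<Delta>,0}(E). Its Method I outer measure is additive on
  positively separated sets, so Borel sets are Carath\'eodory measurable for it, and it dominates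
  c P^h_\<Delta> on every set where the infimum of C_r(E_x) g(r) over 0 < r < \<eta> is at least c.
  Comparing simple functions below this infimum and letting \<eta> \<rightarrow> 0 by monotone convergence
  gives the inequality.

  For measurability, C_r(K) \<le> m iff every (m+1)-point subset of K has gap at most r, and by
  compactness of E the largest gap of an (m+1)-point subset of E_x is upper semicontinuous in x.
\<close>

section \<open>Metric outer measures\<close>

lemma ennreal_suminf_tail_less:
  fixes f :: "nat \<Rightarrow> ennreal"
  assumes fin: "(\<Sum>k. f k) < top" and e: "0 < e"
  shows "\<exists>n. (\<Sum>k. f (k + n)) < e"
proof -
  have "(\<Sum>k. f k) < (\<Sum>k. f k) + e"
    using ennreal_add_left_cancel_less[of "\<Sum>k. f k" 0 e] fin e by simp
  also have "\<dots> = (SUP n. (\<Sum>k<n. f k) + e)"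
    by (simp add: suminf_eq_SUP ennreal_SUP_add_left)
  finally obtain n where n: "(\<Sum>k. f k) < (\<Sum>k<n. f k) + e"
    by (auto simp: less_SUP_iff)
  have "(\<Sum>k. f k) = (\<Sum>k<n. f k) + (\<Sum>k. f (k + n))"
    using suminf_offset[of f n, OF summableI] by (simp add: add.commute)
  with n have "(\<Sum>k<n. f k) + (\<Sum>k. f (k + n)) < (\<Sum>k<n. f k) + e"
    by simp
  then show ?thesis
    by (auto simp: ennreal_add_left_cancel_less)
qed

lemma outer_UN_incseq_le:
  fixes \<mu> :: "'a set \<Rightarrow> ennreal"
  assumes mono: "\<And>A B. A \<subseteq> B \<Longrightarrow> \<mu> A \<le> \<mu> B"
    and csub: "\<And>A. \<mu> (\<Union>i. A i) \<le> (\<Sum>i. \<mu> (A i))"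
    and "mono A"
  shows "\<mu> (\<Union>m. A m) \<le> \<mu> (A 0) + (\<Sum>k. \<mu> (A (Suc k) - A k))"
proof -
  have "\<mu> (\<Union>m. A m) \<le> (\<Sum>k. \<mu> (disjointed A k))"
    using csub[of "disjointed A"] by (simp add: UN_disjointed_eq)
  also have "\<dots> = (\<Sum>k. \<mu> (disjointed A (k + 1))) + \<mu> (disjointed A 0)"
    using suminf_offset[of "\<lambda>k. \<mu> (disjointed A k)" 1, OF summableI] by simp
  also have "\<dots> = \<mu> (A 0) + (\<Sum>k. \<mu> (A (Suc k) - A k))"
    using \<open>mono A\<close> by (simp add: disjointed_mono add.commute)
  finally show ?thesis .
qed

lemma sum_le_Union_if_separated:
  fixes \<mu> :: "'a::metric_space set \<Rightarrow> ennreal" and R :: "nat \<Rightarrow> 'a set"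
  assumes sep: "\<And>A B e. e > 0 \<Longrightarrow> \<forall>a\<in>A. \<forall>b\<in>B. e \<le> dist a b \<Longrightarrow> \<mu> A + \<mu> B \<le> \<mu> (A \<union> B)"
    and separated: "\<And>n. \<exists>e>0. \<forall>a\<in>(\<Union>k<n. R k). \<forall>b\<in>R n. e \<le> dist a b"
  shows "(\<Sum>k<N. \<mu> (R k)) \<le> \<mu> (\<Union>k<N. R k)"
proof (induction N)
  case (Suc N)
  obtain e where "e > 0" "\<forall>a\<in>(\<Union>k<N. R k). \<forall>b\<in>R N. e \<le> dist a b"
    using separated by blast
  then have "\<mu> (\<Union>k<N. R k) + \<mu> (R N) \<le> \<mu> ((\<Union>k<N. R k) \<union> R N)"
    by (intro sep) auto
  also have "\<dots> = \<mu> (\<Union>k<Suc N. R k)"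
    by (simp add: lessThan_Suc Un_commute)
  finally have "\<mu> (\<Union>k<N. R k) + \<mu> (R N) \<le> \<mu> (\<Union>k<Suc N. R k)" .
  with Suc show ?case
    by (simp add: add_right_mono order_trans[OF add_right_mono])
qed simp

lemma suminf_le_twice_if_alternately_separated:
  fixes \<mu> :: "'a::metric_space set \<Rightarrow> ennreal"
  assumes mono: "\<And>A B. A \<subseteq> B \<Longrightarrow> \<mu> A \<le> \<mu> B"
    and sep: "\<And>A B e. e > 0 \<Longrightarrow> \<forall>a\<in>A. \<forall>b\<in>B. e \<le> dist a b \<Longrightarrow> \<mu> A + \<mu> B \<le> \<mu> (A \<union> B)"
    and separated: "\<And>j n. \<exists>e>0. \<forall>a\<in>(\<Union>k<n. R (2*k+j)). \<forall>b\<in>R (2*n+j). e \<le> dist a b"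
    and sub: "\<And>k. R k \<subseteq> T"
  shows "(\<Sum>k. \<mu> (R k)) \<le> 2 * \<mu> T"
proof (rule suminf_le_const[OF summableI])
  fix n
  have part: "(\<Sum>k<n. \<mu> (R (2*k+j))) \<le> \<mu> T" for j
  proof -
    have "(\<Sum>k<n. \<mu> (R (2*k+j))) \<le> \<mu> (\<Union>k<n. R (2*k+j))"
      using sum_le_Union_if_separated[OF sep separated] .
    also have "\<dots> \<le> \<mu> T"
      using sub by (intro mono) auto
    finally show ?thesis .
  qed
  have "(\<Sum>k<n. \<mu> (R k)) \<le> (\<Sum>k<2*n. \<mu> (R k))"
    by (intro sum_mono2) auto
  also have "\<dots> = (\<Sum>k<n. \<mu> (R (2*k))) + (\<Sum>k<n. \<mu> (R (2*k+1)))"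
    by (induction n) (simp_all add: algebra_simps lessThan_Suc)
  also have "\<dots> \<le> \<mu> T + \<mu> T"
    using part[of 0] part[of 1] by (auto intro: add_mono)
  finally show "(\<Sum>k<n. \<mu> (R k)) \<le> 2 * \<mu> T"
    by (simp add: mult_2)
qed

definition infdist_layer :: "'a::metric_space set \<Rightarrow> 'a set \<Rightarrow> nat \<Rightarrow> 'a set" where
  "infdist_layer F T n = {x \<in> T. 1 / real (Suc n) \<le> infdist x F}"

lemma mono_infdist_layer: "mono (infdist_layer F T)"
proof (rule monoI)
  fix m m' :: nat assume "m \<le> m'"
  then have "1 / real (Suc m') \<le> 1 / real (Suc m)"
    by (intro divide_left_mono) auto
  then show "infdist_layer F T m \<le> infdist_layer F T m'"
    by (auto simp: infdist_layer_def)
qed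

lemma infdist_layer_subset: "infdist_layer F T n \<subseteq> T - F"
proof
  fix x assume "x \<in> infdist_layer F T n"
  moreover have "0 < 1 / real (Suc n)"
    by simp
  ultimately show "x \<in> T - F"
    unfolding infdist_layer_def by (force simp: infdist_zero)
qed

lemma UN_infdist_layer:
  assumes "closed F" "F \<noteq> {}"
  shows "(\<Union>m. infdist_layer F T (m + n)) = T - F"
proof
  show "T - F \<subseteq> (\<Union>m. infdist_layer F T (m + n))"
  proof
    fix x assume x: "x \<in> T - F"
    then have "infdist x F > 0"
      using in_closed_iff_infdist_zero[OF assms] infdist_nonneg[of x F] by auto
    then obtain k where "k > 0" "inverse (real k) < infdist x F"
      using ex_inverse_of_nat_less by blast
    then have "x \<in> infdist_layer F T (k - 1)"
      using x by (simp add: infdist_layer_def inverse_eq_divide)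
    also have "\<dots> \<subseteq> infdist_layer F T (k - 1 + n)"
      by (rule monoD[OF mono_infdist_layer]) simp
    finally show "x \<in> (\<Union>m. infdist_layer F T (m + n))"
      by blast
  qed
  show "(\<Union>m. infdist_layer F T (m + n)) \<subseteq> T - F"
    using infdist_layer_subset by blast
qed

lemma infdist_layer_separated:
  assumes "a \<in> F" "b \<in> infdist_layer F T n"
  shows "1 / real (Suc n) \<le> dist a b"
proof -
  have "1 / real (Suc n) \<le> infdist b F"
    using assms(2) by (simp add: infdist_layer_def)
  also have "\<dots> \<le> dist b a"
    by (rule infdist_le[OF assms(1)])
  finally show ?thesis
    by (simp add: dist_commute)
qed

lemma infdist_layers_separated:
  assumes "Suc i < m" "a \<in> infdist_layer F T (Suc i)" "b \<in> T" "b \<notin> infdist_layer F T m"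
  shows "1 / real m - 1 / real (Suc m) \<le> dist a b"
proof -
  have "1 / real m \<le> 1 / real (Suc (Suc i))"
    using assms by (intro divide_left_mono) auto
  also have "\<dots> \<le> infdist a F"
    using assms by (auto simp: infdist_layer_def)
  finally have "1 / real m \<le> infdist a F" .
  moreover have "infdist b F < 1 / real (Suc m)"
    using assms by (auto simp: infdist_layer_def)
  moreover have "infdist a F \<le> infdist b F + dist a b"
    using infdist_triangle[of a F b] by (simp add: dist_commute)
  ultimately show ?thesis
    by linarith
qed

lemma metric_outer_measure_closed_split:
  fixes \<mu> :: "'a::metric_space set \<Rightarrow> ennreal"
  assumes mono: "\<And>A B. A \<subseteq> B \<Longrightarrow> \<mu> A \<le> \<mu> B"
    and empty: "\<mu> {} = 0"
    and csub: "\<And>A. \<mu> (\<Union>i. A i) \<le> (\<Sum>i. \<mu> (A i))"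
    and sep: "\<And>A B e. e > 0 \<Longrightarrow> \<forall>a\<in>A. \<forall>b\<in>B. e \<le> dist a b \<Longrightarrow> \<mu> A + \<mu> B \<le> \<mu> (A \<union> B)"
    and "closed F"
  shows "\<mu> (T \<inter> F) + \<mu> (T - F) \<le> \<mu> T"
proof (cases "F = {} \<or> \<mu> T = top")
  case True
  then show ?thesis
    using empty by auto
next
  case False
  then have "F \<noteq> {}" and fin: "\<mu> T < top"
    by (auto simp: top.not_eq_extremum)
  define S where "S = infdist_layer F T"
  define R where "R k = S (Suc k) - S k" for k
  have inner: "\<mu> (T \<inter> F) + \<mu> (S n) \<le> \<mu> T" for n
  proof -
    have "\<mu> (T \<inter> F) + \<mu> (S n) \<le> \<mu> ((T \<inter> F) \<union> S n)"
      using infdist_layer_separated by (intro sep[of "1 / real (Suc n)"]) (auto simp: S_def)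
    also have "\<dots> \<le> \<mu> T"
      using infdist_layer_subset by (intro mono) (auto simp: S_def)
    finally show ?thesis .
  qed
  \<comment> \<open>alternate annuli R k are positively separated, so their series converges, and
    \<mu> (T - F) exceeds \<mu> (S n) by at most a tail of it\<close>
  have "(\<Sum>k. \<mu> (R k)) \<le> 2 * \<mu> T"
  proof (rule suminf_le_twice_if_alternately_separated[OF mono sep])
    show "R k \<subseteq> T" for k
      using infdist_layer_subset by (auto simp: R_def S_def)
    show "\<exists>e>0. \<forall>a\<in>(\<Union>k<n. R (2*k+j)). \<forall>b\<in>R (2*n+j). e \<le> dist a b" for j n
    proof (cases "n = 0")
      case False
      have "1 / real (2*n+j) - 1 / real (Suc (2*n+j)) \<le> dist a b"
        if "k < n" "a \<in> R (2*k+j)" "b \<in> R (2*n+j)" for k a b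
        using that infdist_layer_subset
        by (intro infdist_layers_separated[of "2*k+j"]) (auto simp: R_def S_def)
      moreover have "1 / real (2*n+j) - 1 / real (Suc (2*n+j)) > 0"
        using False by (simp add: frac_less2)
      ultimately show ?thesis
        by blast
    qed (auto intro: exI[of _ 1])
  qed
  with fin have fin_R: "(\<Sum>k. \<mu> (R k)) < top"
    by (auto simp: ennreal_mult_less_top intro: le_less_trans)
  have cover: "\<mu> (T - F) \<le> \<mu> (S n) + (\<Sum>k. \<mu> (R (k + n)))" for n
  proof -
    have shift: "mono (\<lambda>m. S (m + n))"
      unfolding S_def by (intro monoI monoD[OF mono_infdist_layer]) simp
    have "T - F = (\<Union>m. S (m + n))"
      using UN_infdist_layer[OF \<open>closed F\<close> \<open>F \<noteq> {}\<close>] by (simp add: S_def)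
    also have "\<mu> \<dots> \<le> \<mu> (S n) + (\<Sum>k. \<mu> (R (k + n)))"
      using outer_UN_incseq_le[OF mono csub shift] by (simp add: R_def)
    finally show ?thesis .
  qed
  show ?thesis
  proof (rule ennreal_le_epsilon)
    fix e :: real assume "0 < e"
    then obtain n where n: "(\<Sum>k. \<mu> (R (k + n))) < ennreal e"
      using ennreal_suminf_tail_less[OF fin_R, of "ennreal e"] by auto
    have "\<mu> (T \<inter> F) + \<mu> (T - F) \<le> (\<mu> (T \<inter> F) + \<mu> (S n)) + (\<Sum>k. \<mu> (R (k + n)))"
      using cover[of n] by (simp add: add.assoc add_left_mono)
    also have "\<dots> \<le> \<mu> T + ennreal e"
      using inner[of n] n by (intro add_mono) auto
    finally show "\<mu> (T \<inter> F) + \<mu> (T - F) \<le> \<mu> T + ennreal e" .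
  qed
qed

section \<open>Packing premeasures with centre-dependent weights\<close>

definition weighted_sum :: "('x \<Rightarrow> real \<Rightarrow> ennreal) \<Rightarrow> ('x \<times> real) set \<Rightarrow> ennreal" where
  "weighted_sum q \<pi> = (SUP F\<in>{F. finite F \<and> F \<subseteq> \<pi>}. \<Sum>p\<in>F. q (fst p) (snd p))"

definition weighted_packing_sup ::
  "real set \<Rightarrow> ('x::metric_space \<Rightarrow> real \<Rightarrow> ennreal) \<Rightarrow> 'x set \<Rightarrow> real \<Rightarrow> ennreal" where
  "weighted_packing_sup \<Delta> q B \<delta> = (SUP \<pi>\<in>{\<pi>. fine_packing_of dist \<Delta> \<delta> B \<pi>}. weighted_sum q \<pi>)"

definition weighted_pre_packing ::
  "real set \<Rightarrow> ('x::metric_space \<Rightarrow> real \<Rightarrow> ennreal) \<Rightarrow> 'x set \<Rightarrow> ennreal" where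
  "weighted_pre_packing \<Delta> q B = (INF \<delta>\<in>{0<..}. weighted_packing_sup \<Delta> q B \<delta>)"

definition weighted_packing_outer ::
  "real set \<Rightarrow> ('x::metric_space \<Rightarrow> real \<Rightarrow> ennreal) \<Rightarrow> 'x set \<Rightarrow> ennreal" where
  "weighted_packing_outer \<Delta> q = outer_measure (Pow UNIV) (weighted_pre_packing \<Delta> q)"

lemma ennreal_SUP_add_SUP_le:
  fixes f g :: "_ \<Rightarrow> ennreal"
  assumes "I \<noteq> {}" "J \<noteq> {}" "\<And>i j. i \<in> I \<Longrightarrow> j \<in> J \<Longrightarrow> f i + g j \<le> C"
  shows "(SUP i\<in>I. f i) + (SUP j\<in>J. g j) \<le> C"
proof -
  have "f i + (SUP j\<in>J. g j) \<le> C" if "i \<in> I" for i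
    using assms(3)[OF that] by (simp add: ennreal_SUP_add_right[OF assms(2)] SUP_least)
  then show ?thesis
    by (simp add: ennreal_SUP_add_left[OF assms(1), symmetric] SUP_least)
qed

lemma fine_packing_of_mono:
  "fine_packing_of d \<Delta> \<delta> B \<pi> \<Longrightarrow> B \<subseteq> B' \<Longrightarrow> \<delta> \<le> \<delta>' \<Longrightarrow> fine_packing_of d \<Delta> \<delta>' B' \<pi>"
  unfolding fine_packing_of_def by force

lemma fine_packing_of_empty_iff: "fine_packing_of d \<Delta> \<delta> {} \<pi> \<longleftrightarrow> \<pi> = {}"
  unfolding fine_packing_of_def packing_def by auto

lemma fine_packing_of_Un_separated:
  assumes \<pi>1: "fine_packing_of dist \<Delta> \<delta> A \<pi>1" and \<pi>2: "fine_packing_of dist \<Delta> \<delta> B \<pi>2"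
    and "\<delta> < e" and sep: "\<forall>a\<in>A. \<forall>b\<in>B. e \<le> dist a b"
  shows "fine_packing_of dist \<Delta> \<delta> (A \<union> B) (\<pi>1 \<union> \<pi>2)"
proof -
  have cross: "snd p < dist (fst p) (fst p')"
    if "p \<in> \<pi>1 \<and> p' \<in> \<pi>2 \<or> p \<in> \<pi>2 \<and> p' \<in> \<pi>1" for p p'
  proof -
    have "e \<le> dist a b" if "a \<in> A \<and> b \<in> B \<or> a \<in> B \<and> b \<in> A" for a b
      using sep that by (metis dist_commute)
    moreover have "fst p \<in> A \<and> fst p' \<in> B \<or> fst p \<in> B \<and> fst p' \<in> A"
      using that \<pi>1 \<pi>2 by (auto simp: fine_packing_of_def)
    ultimately have "e \<le> dist (fst p) (fst p')"
      by blast
    moreover have "snd p \<le> \<delta>"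
      using that \<pi>1 \<pi>2 by (auto simp: fine_packing_of_def)
    ultimately show ?thesis
      using \<open>\<delta> < e\<close> by linarith
  qed
  have "snd p < dist (fst p) (fst p')" if "p \<in> \<pi>1 \<union> \<pi>2" "p' \<in> \<pi>1 \<union> \<pi>2" "p \<noteq> p'" for p p'
    using that cross[of p p'] \<pi>1 \<pi>2 by (auto simp: fine_packing_of_def packing_def)
  with \<pi>1 \<pi>2 show ?thesis
    by (auto simp: fine_packing_of_def packing_def)
qed

lemma weighted_packing_sup_mono:
  "B \<subseteq> B' \<Longrightarrow> \<delta> \<le> \<delta>' \<Longrightarrow> weighted_packing_sup \<Delta> q B \<delta> \<le> weighted_packing_sup \<Delta> q B' \<delta>'"
  unfolding weighted_packing_sup_def by (rule SUP_subset_mono) (auto intro: fine_packing_of_mono)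

lemma weighted_pre_packing_mono:
  "B \<subseteq> B' \<Longrightarrow> weighted_pre_packing \<Delta> q B \<le> weighted_pre_packing \<Delta> q B'"
  unfolding weighted_pre_packing_def by (intro INF_mono) (auto intro: weighted_packing_sup_mono)

lemma weighted_pre_packing_empty [simp]: "weighted_pre_packing \<Delta> q {} = 0"
  by (simp add: weighted_pre_packing_def weighted_packing_sup_def fine_packing_of_empty_iff
      weighted_sum_def)

lemma weighted_pre_packing_eq_INF_less:
  assumes "\<epsilon> > 0"
  shows "weighted_pre_packing \<Delta> q B = (INF \<delta>\<in>{0<..<\<epsilon>}. weighted_packing_sup \<Delta> q B \<delta>)"
  unfolding weighted_pre_packing_def
proof (rule antisym)
  show "(INF \<delta>\<in>{0<..}. weighted_packing_sup \<Delta> q B \<delta>) \<le> (INF \<delta>\<in>{0<..<\<epsilon>}. weighted_packing_sup \<Delta> q B \<delta>)"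
    by (rule INF_superset_mono) auto
  show "(INF \<delta>\<in>{0<..<\<epsilon>}. weighted_packing_sup \<Delta> q B \<delta>) \<le> (INF \<delta>\<in>{0<..}. weighted_packing_sup \<Delta> q B \<delta>)"
  proof (rule INF_greatest)
    fix \<delta> :: real assume "\<delta> \<in> {0<..}"
    then have "min \<delta> (\<epsilon>/2) \<in> {0<..<\<epsilon>}"
      using assms by auto
    then have "(INF \<delta>\<in>{0<..<\<epsilon>}. weighted_packing_sup \<Delta> q B \<delta>) \<le> weighted_packing_sup \<Delta> q B (min \<delta> (\<epsilon>/2))"
      by (rule INF_lower)
    also have "\<dots> \<le> weighted_packing_sup \<Delta> q B \<delta>"
      by (rule weighted_packing_sup_mono) auto
    finally show "(INF \<delta>\<in>{0<..<\<epsilon>}. weighted_packing_sup \<Delta> q B \<delta>) \<le> weighted_packing_sup \<Delta> q B \<delta>" .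
  qed
qed

lemma weighted_sum_Un_le:
  assumes "\<pi>1 \<inter> \<pi>2 = {}"
  shows "weighted_sum q \<pi>1 + weighted_sum q \<pi>2 \<le> weighted_sum q (\<pi>1 \<union> \<pi>2)"
  unfolding weighted_sum_def
proof (rule ennreal_SUP_add_SUP_le)
  fix F G assume F: "F \<in> {F. finite F \<and> F \<subseteq> \<pi>1}" and G: "G \<in> {F. finite F \<and> F \<subseteq> \<pi>2}"
  then have "(\<Sum>p\<in>F. q (fst p) (snd p)) + (\<Sum>p\<in>G. q (fst p) (snd p)) = (\<Sum>p\<in>F \<union> G. q (fst p) (snd p))"
    using assms by (subst sum.union_disjoint) auto
  also have "\<dots> \<le> (SUP F\<in>{F. finite F \<and> F \<subseteq> \<pi>1 \<union> \<pi>2}. \<Sum>p\<in>F. q (fst p) (snd p))"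
    using F G by (intro SUP_upper) auto
  finally show "(\<Sum>p\<in>F. q (fst p) (snd p)) + (\<Sum>p\<in>G. q (fst p) (snd p))
      \<le> (SUP F\<in>{F. finite F \<and> F \<subseteq> \<pi>1 \<union> \<pi>2}. \<Sum>p\<in>F. q (fst p) (snd p))" .
qed auto

lemma weighted_pre_packing_separated:
  assumes "e > 0" and sep: "\<forall>a\<in>A. \<forall>b\<in>B. e \<le> dist a b"
  shows "weighted_pre_packing \<Delta> q A + weighted_pre_packing \<Delta> q B \<le> weighted_pre_packing \<Delta> q (A \<union> B)"
proof -
  have "weighted_packing_sup \<Delta> q A \<delta> + weighted_packing_sup \<Delta> q B \<delta> \<le> weighted_packing_sup \<Delta> q (A \<union> B) \<delta>"
    if "\<delta> < e" for \<delta>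
    unfolding weighted_packing_sup_def
  proof (rule ennreal_SUP_add_SUP_le)
    fix \<pi>1 \<pi>2 assume \<pi>1: "\<pi>1 \<in> {\<pi>. fine_packing_of dist \<Delta> \<delta> A \<pi>}" and \<pi>2: "\<pi>2 \<in> {\<pi>. fine_packing_of dist \<Delta> \<delta> B \<pi>}"
    then have "\<pi>1 \<inter> \<pi>2 = {}"
      using sep \<open>e > 0\<close> by (fastforce simp: fine_packing_of_def)
    then have "weighted_sum q \<pi>1 + weighted_sum q \<pi>2 \<le> weighted_sum q (\<pi>1 \<union> \<pi>2)"
      by (rule weighted_sum_Un_le)
    also have "\<dots> \<le> (SUP \<pi>\<in>{\<pi>. fine_packing_of dist \<Delta> \<delta> (A \<union> B) \<pi>}. weighted_sum q \<pi>)"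
      using fine_packing_of_Un_separated[OF _ _ \<open>\<delta> < e\<close> sep] \<pi>1 \<pi>2 by (intro SUP_upper) auto
    finally show "weighted_sum q \<pi>1 + weighted_sum q \<pi>2
        \<le> (SUP \<pi>\<in>{\<pi>. fine_packing_of dist \<Delta> \<delta> (A \<union> B) \<pi>}. weighted_sum q \<pi>)" .
  qed (auto simp: fine_packing_of_def packing_def intro!: exI[of _ "{}"])
  then show ?thesis
    unfolding weighted_pre_packing_eq_INF_less[OF \<open>e > 0\<close>]
    by (intro INF_greatest order_trans[OF add_mono[OF INF_lower INF_lower]]) auto
qed

lemma outer_measure_space_weighted_packing_outer:
  "outer_measure_space (Pow UNIV) (weighted_packing_outer \<Delta> q)"
  unfolding weighted_packing_outer_def
  by (rule ring_of_sets.outer_measure_space_outer_measure[OF ring_of_sets_Pow])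
     (auto simp: positive_def increasing_def weighted_pre_packing_mono)

lemma weighted_packing_outer_mono:
  "A \<subseteq> B \<Longrightarrow> weighted_packing_outer \<Delta> q A \<le> weighted_packing_outer \<Delta> q B"
  using outer_measure_space_weighted_packing_outer[of \<Delta> q] unfolding outer_measure_space_def increasing_def
  by auto

lemma weighted_packing_outer_empty: "weighted_packing_outer \<Delta> q {} = 0"
  using outer_measure_space_weighted_packing_outer[of \<Delta> q] unfolding outer_measure_space_def positive_def
  by auto

lemma weighted_packing_outer_countably_subadditive:
  "weighted_packing_outer \<Delta> q (\<Union>i. A i) \<le> (\<Sum>i. weighted_packing_outer \<Delta> q (A i))"
proof -
  have "weighted_packing_outer \<Delta> q (\<Union>i. A i) = weighted_packing_outer \<Delta> q (\<Union>i. disjointed A i)"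
    by (simp add: UN_disjointed_eq)
  also have "\<dots> \<le> (\<Sum>i. weighted_packing_outer \<Delta> q (disjointed A i))"
    using outer_measure_space_weighted_packing_outer[of \<Delta> q]
    unfolding outer_measure_space_def countably_subadditive_def
    by (auto simp: disjoint_family_disjointed)
  also have "\<dots> \<le> (\<Sum>i. weighted_packing_outer \<Delta> q (A i))"
    by (intro suminf_le summableI weighted_packing_outer_mono disjointed_subset)
  finally show ?thesis .
qed

lemma weighted_packing_outer_le_pre: "weighted_packing_outer \<Delta> q X \<le> weighted_pre_packing \<Delta> q X"
proof -
  have "weighted_packing_outer \<Delta> q X \<le> (\<Sum>i. weighted_pre_packing \<Delta> q (if i = 0 then X else {}))"
    unfolding weighted_packing_outer_def
    by (rule ring_of_sets.outer_measure_le[OF ring_of_sets_Pow])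
       (auto simp: positive_def increasing_def weighted_pre_packing_mono)
  also have "\<dots> = weighted_pre_packing \<Delta> q X"
    by (subst suminf_finite[of "{0}"]) auto
  finally show ?thesis .
qed

lemma weighted_packing_outer_separated:
  assumes "e > 0" and sep: "\<forall>a\<in>A. \<forall>b\<in>B. e \<le> dist a b"
  shows "weighted_packing_outer \<Delta> q A + weighted_packing_outer \<Delta> q B \<le> weighted_packing_outer \<Delta> q (A \<union> B)"
  unfolding weighted_packing_outer_def outer_measure_def[of _ _ "A \<union> B"]
proof (rule INF_greatest)
  let ?\<nu> = "weighted_pre_packing \<Delta> q"
  fix C :: "nat \<Rightarrow> 'a set"
  assume C: "C \<in> {C. range C \<subseteq> Pow UNIV \<and> disjoint_family C \<and> A \<union> B \<subseteq> (\<Union>i. C i)}"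
  have outer_le: "outer_measure (Pow UNIV) ?\<nu> X \<le> (\<Sum>i. ?\<nu> (C i \<inter> X))" if "X \<subseteq> A \<union> B" for X
    by (rule ring_of_sets.outer_measure_le[OF ring_of_sets_Pow])
       (use C that in \<open>auto simp: positive_def increasing_def weighted_pre_packing_mono\<close>)
  have "outer_measure (Pow UNIV) ?\<nu> A + outer_measure (Pow UNIV) ?\<nu> B
      \<le> (\<Sum>i. ?\<nu> (C i \<inter> A)) + (\<Sum>i. ?\<nu> (C i \<inter> B))"
    by (intro add_mono outer_le) auto
  also have "\<dots> = (\<Sum>i. ?\<nu> (C i \<inter> A) + ?\<nu> (C i \<inter> B))"
    by (rule suminf_add[OF summableI summableI])
  also have "\<dots> \<le> (\<Sum>i. ?\<nu> (C i))"
  proof (intro suminf_le summableI)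
    fix i
    have "?\<nu> (C i \<inter> A) + ?\<nu> (C i \<inter> B) \<le> ?\<nu> ((C i \<inter> A) \<union> (C i \<inter> B))"
      using sep by (intro weighted_pre_packing_separated[OF \<open>e > 0\<close>]) auto
    also have "\<dots> \<le> ?\<nu> (C i)"
      by (rule weighted_pre_packing_mono) auto
    finally show "?\<nu> (C i \<inter> A) + ?\<nu> (C i \<inter> B) \<le> ?\<nu> (C i)" .
  qed
  finally show "outer_measure (Pow UNIV) ?\<nu> A + outer_measure (Pow UNIV) ?\<nu> B \<le> (\<Sum>i. ?\<nu> (C i))" .
qed

lemma closed_in_lambda_system_weighted_packing_outer:
  assumes "closed F"
  shows "F \<in> lambda_system UNIV (Pow UNIV) (weighted_packing_outer \<Delta> q)"
  unfolding lambda_system_def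
proof (intro CollectI conjI ballI)
  let ?\<mu> = "weighted_packing_outer \<Delta> q"
  fix T :: "'a set"
  have "?\<mu> (T \<inter> F) + ?\<mu> (T - F) \<le> ?\<mu> T"
    by (rule metric_outer_measure_closed_split[OF weighted_packing_outer_mono
          weighted_packing_outer_empty weighted_packing_outer_countably_subadditive
          weighted_packing_outer_separated assms]) auto
  moreover have "?\<mu> T \<le> ?\<mu> (T \<inter> F) + ?\<mu> (T - F)"
  proof -
    have "subadditive (Pow UNIV) ?\<mu>"
      using outer_measure_space_weighted_packing_outer[of \<Delta> q] unfolding outer_measure_space_def
      by (intro ring_of_sets.countably_subadditive_subadditive[OF ring_of_sets_Pow]) auto
    then have "?\<mu> ((T \<inter> F) \<union> (T - F)) \<le> ?\<mu> (T \<inter> F) + ?\<mu> (T - F)"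
      by (rule subadditiveD) auto
    then show ?thesis
      by (simp add: Int_Diff_Un)
  qed
  ultimately show "?\<mu> (F \<inter> T) + ?\<mu> ((UNIV - F) \<inter> T) = ?\<mu> T"
    by (simp add: Int_commute Diff_eq)
qed simp

lemma measure_space_weighted_packing_outer:
  "measure_space UNIV (lambda_system UNIV (Pow UNIV) (weighted_packing_outer \<Delta> q)) (weighted_packing_outer \<Delta> q)"
  by (rule sigma_algebra.caratheodory_lemma[OF sigma_algebra_Pow outer_measure_space_weighted_packing_outer])

lemma borel_subset_lambda_system_weighted_packing_outer:
  "sets borel \<subseteq> lambda_system UNIV (Pow UNIV) (weighted_packing_outer \<Delta> (q::'a::metric_space \<Rightarrow> real \<Rightarrow> ennreal))"
proof -
  let ?L = "lambda_system UNIV (Pow UNIV) (weighted_packing_outer \<Delta> q)"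
  have "sigma_algebra UNIV ?L"
    using measure_space_weighted_packing_outer[of \<Delta> q] by (simp add: measure_space_def)
  moreover have "{S. open S} \<subseteq> ?L"
  proof
    fix S :: "'a set" assume "S \<in> {S. open S}"
    then have "UNIV - (- S) \<in> ?L"
      by (intro algebra.lambda_system_Compl[OF algebra_Pow] closed_in_lambda_system_weighted_packing_outer)
         (auto simp: closed_def)
    then show "S \<in> ?L"
      by simp
  qed
  ultimately show ?thesis
    unfolding sets_borel by (rule sigma_algebra.sigma_sets_subset)
qed

lemma weighted_packing_outer_finite_additive:
  fixes A :: "'i \<Rightarrow> 'a::metric_space set"
  assumes "finite I" "disjoint_family_on A I" "A ` I \<subseteq> sets borel"
  shows "(\<Sum>i\<in>I. weighted_packing_outer \<Delta> q (A i)) = weighted_packing_outer \<Delta> q (\<Union>i\<in>I. A i)"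
proof -
  let ?L = "lambda_system UNIV (Pow UNIV) (weighted_packing_outer \<Delta> q)"
  let ?N = "measure_of UNIV ?L (weighted_packing_outer \<Delta> q)"
  have sa: "sigma_algebra UNIV ?L" and pos: "positive ?L (weighted_packing_outer \<Delta> q)"
    and ca: "countably_additive ?L (weighted_packing_outer \<Delta> q)"
    using measure_space_weighted_packing_outer[of \<Delta> q] by (auto simp: measure_space_def)
  have sets_N: "sets ?N = ?L"
    using sa by (simp add: sigma_algebra.sigma_sets_eq)
  have AL: "A ` I \<subseteq> ?L"
    using assms(3) borel_subset_lambda_system_weighted_packing_outer by blast
  then have UL: "(\<Union>i\<in>I. A i) \<in> ?L"
    using sets_N assms(1) sets.finite_UN[of I A ?N] by auto
  have "(\<Sum>i\<in>I. emeasure ?N (A i)) = emeasure ?N (\<Union>i\<in>I. A i)"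
    by (rule sum_emeasure) (use AL sets_N assms in auto)
  then show ?thesis
    using emeasure_measure_of_sigma[OF sa pos ca] AL UL by (simp add: image_subset_iff)
qed

lemma weighted_sum_cmult_le:
  assumes "\<forall>p\<in>\<pi>. c * q1 (fst p) (snd p) \<le> q2 (fst p) (snd p)"
  shows "c * weighted_sum q1 \<pi> \<le> weighted_sum q2 \<pi>"
  unfolding weighted_sum_def SUP_mult_left_ennreal
proof (rule SUP_mono)
  fix F assume F: "F \<in> {F. finite F \<and> F \<subseteq> \<pi>}"
  have "c * (\<Sum>p\<in>F. q1 (fst p) (snd p)) \<le> (\<Sum>p\<in>F. q2 (fst p) (snd p))"
    unfolding sum_distrib_left using F assms by (intro sum_mono) auto
  with F show "\<exists>G\<in>{F. finite F \<and> F \<subseteq> \<pi>}. c * (\<Sum>p\<in>F. q1 (fst p) (snd p)) \<le> (\<Sum>p\<in>G. q2 (fst p) (snd p))"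
    by blast
qed

lemma weighted_pre_packing_cmult_le:
  assumes "\<eta> > 0" and le: "\<forall>x\<in>B. \<forall>r. 0 < r \<longrightarrow> r < \<eta> \<longrightarrow> c * q1 x r \<le> q2 x r"
  shows "c * weighted_pre_packing \<Delta> q1 B \<le> weighted_pre_packing \<Delta> q2 B"
  unfolding weighted_pre_packing_def[of _ q2]
proof (rule INF_greatest)
  fix \<delta> :: real assume "\<delta> \<in> {0<..}"
  define \<delta>' where "\<delta>' = min \<delta> (\<eta>/2)"
  have \<delta>': "\<delta>' \<in> {0<..}" "\<delta>' \<le> \<delta>" "\<delta>' < \<eta>"
    using \<open>\<delta> \<in> {0<..}\<close> \<open>\<eta> > 0\<close> by (auto simp: \<delta>'_def)
  have "c * weighted_pre_packing \<Delta> q1 B \<le> c * weighted_packing_sup \<Delta> q1 B \<delta>'"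
    unfolding weighted_pre_packing_def by (intro mult_left_mono INF_lower \<delta>') simp
  also have "\<dots> = (SUP \<pi>\<in>{\<pi>. fine_packing_of dist \<Delta> \<delta>' B \<pi>}. c * weighted_sum q1 \<pi>)"
    unfolding weighted_packing_sup_def by (rule SUP_mult_left_ennreal)
  also have "\<dots> \<le> weighted_packing_sup \<Delta> q2 B \<delta>"
    unfolding weighted_packing_sup_def
  proof (rule SUP_mono)
    fix \<pi> assume \<pi>: "\<pi> \<in> {\<pi>. fine_packing_of dist \<Delta> \<delta>' B \<pi>}"
    have "c * q1 (fst p) (snd p) \<le> q2 (fst p) (snd p)" if "p \<in> \<pi>" for p
    proof -
      have "fst p \<in> B" "0 < snd p" "snd p < \<eta>"
        using \<pi> that \<delta>' by (auto simp: fine_packing_of_def packing_def)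
      then show ?thesis
        using le by blast
    qed
    then have "c * weighted_sum q1 \<pi> \<le> weighted_sum q2 \<pi>"
      by (intro weighted_sum_cmult_le) auto
    moreover have "fine_packing_of dist \<Delta> \<delta> B \<pi>"
      using \<pi> \<delta>' by (auto intro: fine_packing_of_mono)
    ultimately show "\<exists>\<pi>'\<in>{\<pi>. fine_packing_of dist \<Delta> \<delta> B \<pi>}. c * weighted_sum q1 \<pi> \<le> weighted_sum q2 \<pi>'"
      by blast
  qed
  finally show "c * weighted_pre_packing \<Delta> q1 B \<le> weighted_packing_sup \<Delta> q2 B \<delta>" .
qed

lemma pre_packing_eq_weighted: "pre_packing dist \<Delta> h B = weighted_pre_packing \<Delta> (\<lambda>_ r. ennreal (h r)) B"
  by (simp add: pre_packing_def weighted_pre_packing_def weighted_packing_sup_def gsum_def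
      weighted_sum_def)

lemma packing_outer_cmult_le_weighted:
  assumes "\<eta> > 0"
    and le: "\<forall>x\<in>A. \<forall>r. 0 < r \<longrightarrow> r < \<eta> \<longrightarrow> c * ennreal (h r) \<le> q x r"
  shows "c * packing_outer dist \<Delta> h A \<le> weighted_packing_outer \<Delta> q A"
  unfolding weighted_packing_outer_def outer_measure_def
proof (rule INF_greatest)
  fix C :: "nat \<Rightarrow> 'a set"
  assume C: "C \<in> {C. range C \<subseteq> Pow UNIV \<and> disjoint_family C \<and> A \<subseteq> (\<Union>i. C i)}"
  then have "packing_outer dist \<Delta> h A \<le> (\<Sum>i. pre_packing dist \<Delta> h (C i \<inter> A))"
    unfolding packing_outer_def by (intro INF_lower) auto
  then have "c * packing_outer dist \<Delta> h A \<le> (\<Sum>i. c * pre_packing dist \<Delta> h (C i \<inter> A))"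
    by (simp add: mult_left_mono)
  also have "\<dots> \<le> (\<Sum>i. weighted_pre_packing \<Delta> q (C i))"
  proof (intro suminf_le summableI)
    fix i
    have "c * pre_packing dist \<Delta> h (C i \<inter> A) \<le> weighted_pre_packing \<Delta> q (C i \<inter> A)"
      unfolding pre_packing_eq_weighted using le by (intro weighted_pre_packing_cmult_le[OF \<open>\<eta> > 0\<close>]) auto
    also have "\<dots> \<le> weighted_pre_packing \<Delta> q (C i)"
      by (rule weighted_pre_packing_mono) auto
    finally show "c * pre_packing dist \<Delta> h (C i \<inter> A) \<le> weighted_pre_packing \<Delta> q (C i)" .
  qed
  finally show "c * packing_outer dist \<Delta> h A \<le> (\<Sum>i. weighted_pre_packing \<Delta> q (C i))" .
qed

lemma sets_packing_measure:
  "sets (packing_measure \<Delta> h :: 'a::metric_space measure) = sets borel"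
  unfolding packing_measure_def
  by (subst sets_measure_of) (auto simp: sets.sigma_sets_eq[of borel, simplified])

lemma space_packing_measure: "space (packing_measure \<Delta> h :: 'a::metric_space measure) = UNIV"
  unfolding packing_measure_def by simp

lemma emeasure_packing_measure_le: "emeasure (packing_measure \<Delta> h) A \<le> packing_outer dist \<Delta> h A"
  unfolding packing_measure_def emeasure_measure_of_conv by auto

section \<open>Gaps, capacities and fibre packings\<close>

lemma gap_antimono: "G \<subseteq> F \<Longrightarrow> gap d F \<le> gap d G"
  unfolding gap_def by (rule INF_superset_mono) auto

lemma gap_le_dist: "x \<in> F \<Longrightarrow> y \<in> F \<Longrightarrow> x \<noteq> y \<Longrightarrow> gap d F \<le> ennreal (d x y)"
  unfolding gap_def by (rule INF_lower2[of "(x, y)"]) auto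

lemma gap_empty [simp]: "gap d {} = top"
  unfolding gap_def by simp

lemma cap_eq_SUP_finite:
  "cap d r K = (SUP G\<in>{G. finite G \<and> G \<subseteq> K \<and> gap d G > ennreal r}. of_nat (card G))"
  (is "_ = ?S")
  unfolding cap_def
proof (rule antisym)
  show "(SUP F\<in>{F. F \<subseteq> K \<and> ennreal r < gap d F}. if finite F then of_nat (card F) else top) \<le> ?S"
  proof (rule SUP_least)
    fix F assume F: "F \<in> {F. F \<subseteq> K \<and> ennreal r < gap d F}"
    show "(if finite F then of_nat (card F) else top) \<le> ?S"
    proof (cases "finite F")
      case True
      with F show ?thesis
        by (auto intro!: SUP_upper2[of F])
    next
      case False
      have large: "of_nat n \<le> ?S" for n
      proof -
        obtain G where G: "G \<subseteq> F" "finite G" "card G = n"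
          using infinite_arbitrarily_large[OF False] by blast
        with F gap_antimono[OF G(1), of d] show ?thesis
          by (intro SUP_upper2[of G]) auto
      qed
      have "?S = top"
      proof (rule ccontr)
        assume "?S \<noteq> top"
        then obtain n where "?S < of_nat n"
          using ennreal_Ex_less_of_nat top.not_eq_extremum by blast
        with large[of n] show False
          by simp
      qed
      then show ?thesis
        using False by (subst \<open>?S = top\<close>) simp
    qed
  qed
  show "?S \<le> (SUP F\<in>{F. F \<subseteq> K \<and> ennreal r < gap d F}. if finite F then of_nat (card F) else top)"
    by (rule SUP_mono) auto
qed

lemma add_sum_SUP_le:
  fixes v :: "'p \<Rightarrow> 's \<Rightarrow> ennreal"
  assumes "finite F" "\<And>p. p \<in> F \<Longrightarrow> S p \<noteq> {}"
    and "\<And>G. \<forall>p\<in>F. G p \<in> S p \<Longrightarrow> c + (\<Sum>p\<in>F. v p (G p)) \<le> B"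
  shows "c + (\<Sum>p\<in>F. SUP s\<in>S p. v p s) \<le> B"
  using assms
proof (induction F arbitrary: c rule: finite_induct)
  case (insert q F)
  have ne: "S q \<noteq> {}"
    using insert.prems(1) by simp
  have "c + (\<Sum>p\<in>insert q F. SUP s\<in>S p. v p s) = (c + (SUP s\<in>S q. v q s)) + (\<Sum>p\<in>F. SUP s\<in>S p. v p s)"
    using insert.hyps by (simp add: add.assoc)
  also have "\<dots> \<le> B"
  proof (rule insert.IH)
    fix G assume G: "\<forall>p\<in>F. G p \<in> S p"
    have "c + v q s + (\<Sum>p\<in>F. v p (G p)) \<le> B" if "s \<in> S q" for s
    proof -
      have "c + (\<Sum>p\<in>insert q F. v p ((G(q := s)) p)) \<le> B"
        using G that insert.hyps by (intro insert.prems(2)) auto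
      moreover have "(\<Sum>p\<in>F. v p ((G(q := s)) p)) = (\<Sum>p\<in>F. v p (G p))"
        using insert.hyps by (intro sum.cong) auto
      ultimately show ?thesis
        using insert.hyps by (simp add: add.assoc)
    qed
    then show "c + (SUP s\<in>S q. v q s) + (\<Sum>p\<in>F. v p (G p)) \<le> B"
      by (simp add: ennreal_SUP_add_right[OF ne] ennreal_SUP_add_left[OF ne, symmetric] SUP_least)
  qed (use insert.prems in auto)
  finally show ?case .
qed simp

definition fibre_packing :: "('a \<times> real) set \<Rightarrow> ('a \<times> real \<Rightarrow> 'b set) \<Rightarrow> (('a \<times> 'b) \<times> real) set" where
  "fibre_packing F G = (\<lambda>(p, y). ((fst p, y), snd p)) ` Sigma F G"

lemma fine_packing_of_fibre_packing:
  assumes \<pi>: "fine_packing_of dist \<Delta> \<delta> X \<pi>" and "F \<subseteq> \<pi>"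
    and G: "\<And>p. p \<in> F \<Longrightarrow> G p \<subseteq> {y. (fst p, y) \<in> E} \<and> ennreal (snd p) < gap dist (G p)"
  shows "fine_packing_of max_dist \<Delta> \<delta> E (fibre_packing F G)"
  unfolding fine_packing_of_def packing_def
proof (intro conjI ballI impI subsetI)
  fix e assume "e \<in> fibre_packing F G"
  then obtain p y where "p \<in> F" "y \<in> G p" "e = ((fst p, y), snd p)"
    by (auto simp: fibre_packing_def)
  with \<pi> G \<open>F \<subseteq> \<pi>\<close> show "0 < snd e" "snd e \<le> \<delta>"
    by (auto simp: fine_packing_of_def packing_def)
next
  fix e e' assume "e \<in> fibre_packing F G" "e' \<in> fibre_packing F G" "e \<noteq> e'"
  obtain p y where e: "p \<in> F" "y \<in> G p" "e = ((fst p, y), snd p)"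
    using \<open>e \<in> fibre_packing F G\<close> by (auto simp: fibre_packing_def)
  obtain p' y' where e': "p' \<in> F" "y' \<in> G p'" "e' = ((fst p', y'), snd p')"
    using \<open>e' \<in> fibre_packing F G\<close> by (auto simp: fibre_packing_def)
  show "snd e < max_dist (fst e) (fst e')"
  proof (cases "p = p'")
    case True
    then have "ennreal (snd p) < ennreal (dist y y')"
      using G[of p] gap_le_dist[of y "G p" y' dist] e e' \<open>e \<noteq> e'\<close> by auto
    then have "snd p < dist y y'"
      by (metis ennreal_leI not_le)
    then show ?thesis
      using e e' by (auto simp: max_dist_def less_max_iff_disj)
  next
    case False
    then have "snd p < dist (fst p) (fst p')"
      using \<pi> \<open>F \<subseteq> \<pi>\<close> \<open>p \<in> F\<close> \<open>p' \<in> F\<close> unfolding fine_packing_of_def packing_def by blast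
    then show ?thesis
      using e e' by (auto simp: max_dist_def less_max_iff_disj)
  qed
next
  fix z assume "z \<in> fst ` fibre_packing F G"
  then obtain p y where "p \<in> F" "y \<in> G p" "z = (fst p, y)"
    by (auto simp: fibre_packing_def)
  then show "z \<in> E"
    using G by blast
next
  fix r assume "r \<in> snd ` fibre_packing F G"
  then obtain p where "p \<in> F" "r = snd p"
    by (auto simp: fibre_packing_def)
  then show "r \<in> \<Delta>"
    using \<pi> \<open>F \<subseteq> \<pi>\<close> by (auto simp: fine_packing_of_def)
qed

lemma sum_card_le_gsum_fibre_packing:
  assumes "finite F" "\<forall>p\<in>F. finite (G p)"
  shows "(\<Sum>p\<in>F. of_nat (card (G p)) * ennreal (w (snd p))) \<le> gsum w (fibre_packing F G)"
proof -
  have inj: "inj_on (\<lambda>(p, y). ((fst p, y), snd p)) (Sigma F G)"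
    by (auto simp: inj_on_def prod_eq_iff)
  have "(\<Sum>p\<in>F. of_nat (card (G p)) * ennreal (w (snd p))) = (\<Sum>(p, y)\<in>Sigma F G. ennreal (w (snd p)))"
    using assms by (simp add: sum.Sigma[symmetric])
  also have "\<dots> = (\<Sum>e\<in>fibre_packing F G. ennreal (w (snd e)))"
    unfolding fibre_packing_def by (subst sum.reindex[OF inj]) (auto intro!: sum.cong)
  also have "\<dots> \<le> gsum w (fibre_packing F G)"
    unfolding gsum_def fibre_packing_def using assms by (intro SUP_upper) auto
  finally show ?thesis .
qed

definition fibre_weight ::
  "(real \<Rightarrow> real) \<Rightarrow> (real \<Rightarrow> real) \<Rightarrow> ('a \<times> 'b::metric_space) set \<Rightarrow> 'a \<Rightarrow> real \<Rightarrow> ennreal" where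
  "fibre_weight g h E x r = cap dist r {y. (x, y) \<in> E} * ennreal (g r) * ennreal (h r)"

lemma fibre_weight_eq_SUP:
  assumes "hausdorff_function g" "hausdorff_function h" "0 < r"
  shows "fibre_weight g h E x r = (SUP G\<in>{G. finite G \<and> G \<subseteq> {y. (x, y) \<in> E} \<and> ennreal r < gap dist G}.
           of_nat (card G) * ennreal (g r * h r))"
proof -
  have "ennreal (g r) * ennreal (h r) = ennreal (g r * h r)"
    using assms by (simp add: hausdorff_function_def ennreal_mult less_imp_le)
  then show ?thesis
    by (simp add: fibre_weight_def cap_eq_SUP_finite mult.assoc SUP_mult_right_ennreal)
qed

lemma sum_fibre_weight_le_packing_sup:
  assumes "hausdorff_function g" "hausdorff_function h"
    and \<pi>: "fine_packing_of dist \<Delta> \<delta> X \<pi>" and "finite F" "F \<subseteq> \<pi>"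
  shows "(\<Sum>p\<in>F. fibre_weight g h E (fst p) (snd p))
    \<le> (SUP \<pi>\<in>{\<pi>. fine_packing_of max_dist \<Delta> \<delta> E \<pi>}. gsum (\<lambda>r. g r * h r) \<pi>)" (is "_ \<le> ?S")
proof -
  define S where "S p = {G. finite G \<and> G \<subseteq> {y. (fst p, y) \<in> E} \<and> ennreal (snd p) < gap dist G}" for p
  have "0 < snd p" if "p \<in> F" for p
    using that \<open>F \<subseteq> \<pi>\<close> \<pi> by (auto simp: fine_packing_of_def packing_def)
  then have "(\<Sum>p\<in>F. fibre_weight g h E (fst p) (snd p))
      = 0 + (\<Sum>p\<in>F. SUP G\<in>S p. of_nat (card G) * ennreal (g (snd p) * h (snd p)))"
    using assms(1,2) by (simp add: fibre_weight_eq_SUP S_def)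
  also have "\<dots> \<le> ?S"
  proof (rule add_sum_SUP_le[OF \<open>finite F\<close>])
    show "S p \<noteq> {}" for p
      by (auto simp: S_def intro!: exI[of _ "{}"])
    fix G assume G: "\<forall>p\<in>F. G p \<in> S p"
    then have "(\<Sum>p\<in>F. of_nat (card (G p)) * ennreal (g (snd p) * h (snd p)))
        \<le> gsum (\<lambda>r. g r * h r) (fibre_packing F G)"
      using \<open>finite F\<close> by (intro sum_card_le_gsum_fibre_packing) (auto simp: S_def)
    also have "\<dots> \<le> ?S"
      using fine_packing_of_fibre_packing[OF \<pi> \<open>F \<subseteq> \<pi>\<close>] G by (intro SUP_upper) (auto simp: S_def)
    finally show "0 + (\<Sum>p\<in>F. of_nat (card (G p)) * ennreal (g (snd p) * h (snd p))) \<le> ?S"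
      by simp
  qed
  finally show ?thesis .
qed

lemma weighted_pre_packing_fibre_weight_le_pre_packing:
  fixes E :: "('a::metric_space \<times> 'b::metric_space) set"
  assumes "hausdorff_function g" "hausdorff_function h"
  shows "weighted_pre_packing \<Delta> (fibre_weight g h E) UNIV \<le> pre_packing max_dist \<Delta> (\<lambda>r. g r * h r) E"
  unfolding weighted_pre_packing_def pre_packing_def
proof (rule INF_mono)
  fix \<delta> :: real assume "\<delta> \<in> {0<..}"
  moreover have "weighted_packing_sup \<Delta> (fibre_weight g h E) UNIV \<delta>
      \<le> (SUP \<pi>\<in>{\<pi>. fine_packing_of max_dist \<Delta> \<delta> E \<pi>}. gsum (\<lambda>r. g r * h r) \<pi>)"
    unfolding weighted_packing_sup_def weighted_sum_def
    using sum_fibre_weight_le_packing_sup[OF assms] by (intro SUP_least) auto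
  ultimately show "\<exists>\<delta>'\<in>{0<..}. weighted_packing_sup \<Delta> (fibre_weight g h E) UNIV \<delta>'
      \<le> (SUP \<pi>\<in>{\<pi>. fine_packing_of max_dist \<Delta> \<delta> E \<pi>}. gsum (\<lambda>r. g r * h r) \<pi>)"
    by blast
qed

section \<open>Measurability of the fibre capacities\<close>

definition max_gap :: "nat \<Rightarrow> 'b::metric_space set \<Rightarrow> ennreal" where
  "max_gap m K = (SUP F\<in>{F. finite F \<and> F \<subseteq> K \<and> card F = Suc m}. gap dist F)"

lemma cap_le_of_nat_iff: "cap dist r K \<le> of_nat m \<longleftrightarrow> max_gap m K \<le> ennreal r"
proof
  assume cap: "cap dist r K \<le> of_nat m"
  show "max_gap m K \<le> ennreal r"
    unfolding max_gap_def
  proof (rule SUP_least, rule ccontr)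
    fix F assume F: "F \<in> {F. finite F \<and> F \<subseteq> K \<and> card F = Suc m}" and "\<not> gap dist F \<le> ennreal r"
    then have "of_nat (card F) \<le> cap dist r K"
      unfolding cap_eq_SUP_finite by (intro SUP_upper) auto
    then have "of_nat (card F) \<le> (of_nat m :: ennreal)"
      using cap by (rule order_trans)
    with F show False
      by simp
  qed
next
  assume max: "max_gap m K \<le> ennreal r"
  show "cap dist r K \<le> of_nat m"
    unfolding cap_eq_SUP_finite
  proof (rule SUP_least, rule ccontr)
    fix G assume G: "G \<in> {G. finite G \<and> G \<subseteq> K \<and> ennreal r < gap dist G}"
      and "\<not> of_nat (card G) \<le> (of_nat m :: ennreal)"
    then have "Suc m \<le> card G"
      by simp
    then obtain F where F: "F \<subseteq> G" "card F = Suc m" "finite F"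
      by (rule obtain_subset_with_card_n)
    then have "ennreal r < gap dist F"
      using G gap_antimono[OF F(1), of dist] by (auto intro: less_le_trans)
    moreover have "gap dist F \<le> max_gap m K"
      unfolding max_gap_def using F G by (intro SUP_upper) auto
    ultimately show False
      using max by simp
  qed
qed

lemma cap_eq_of_nat:
  assumes "cap d r K \<noteq> top"
  shows "\<exists>m. cap d r K = of_nat m"
proof -
  let ?C = "(\<lambda>G. of_nat (card G) :: ennreal) ` {G. finite G \<and> G \<subseteq> K \<and> gap d G > ennreal r}"
  obtain n where n: "cap d r K < of_nat n"
    using assms ennreal_Ex_less_of_nat top.not_eq_extremum by blast
  have "?C \<subseteq> of_nat ` {..n}"
  proof
    fix c assume "c \<in> ?C"
    then obtain G where c: "c = of_nat (card G)" "G \<in> {G. finite G \<and> G \<subseteq> K \<and> gap d G > ennreal r}"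
      by blast
    then have "c \<le> cap d r K"
      unfolding cap_eq_SUP_finite by (auto intro: SUP_upper)
    with n c have "of_nat (card G) < (of_nat n :: ennreal)"
      using le_less_trans by blast
    then have "card G \<le> n"
      by (simp add: of_nat_less_iff)
    with c show "c \<in> of_nat ` {..n}"
      by auto
  qed
  then have "finite ?C"
    by (rule finite_subset) simp
  moreover have "?C \<noteq> {}"
    by (auto intro!: exI[of _ "{}"])
  ultimately have "Sup ?C \<in> ?C"
    by (simp add: Max_Sup[symmetric])
  then show ?thesis
    unfolding cap_eq_SUP_finite by auto
qed

lemma cap_mult_less_iff:
  assumes "gr > 0"
  shows "cap dist r K * gr < t \<longleftrightarrow> (\<exists>m. max_gap m K \<le> ennreal r \<and> of_nat m * gr < t)"
proof
  assume "\<exists>m. max_gap m K \<le> ennreal r \<and> of_nat m * gr < t"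
  then obtain m where "max_gap m K \<le> ennreal r" "of_nat m * gr < t"
    by blast
  moreover from this have "cap dist r K * gr \<le> of_nat m * gr"
    by (intro mult_right_mono) (auto simp: cap_le_of_nat_iff)
  ultimately show "cap dist r K * gr < t"
    by simp
next
  assume lt: "cap dist r K * gr < t"
  then have "cap dist r K \<noteq> top"
    using \<open>gr > 0\<close> by (auto simp: ennreal_mult_eq_top_iff)
  then obtain m where "cap dist r K = of_nat m"
    using cap_eq_of_nat by blast
  with lt show "\<exists>m. max_gap m K \<le> ennreal r \<and> of_nat m * gr < t"
    using cap_le_of_nat_iff[of r K m] by auto
qed

lemma ennreal_exists_add_less:
  fixes a b :: ennreal
  assumes "a < b"
  shows "\<exists>e>0. a + ennreal e < b"
proof -
  obtain c where "a < c" "c < b"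
    using dense[OF assms] by blast
  moreover obtain a' c' where "a = ennreal a'" "0 \<le> a'" "c = ennreal c'" "0 \<le> c'"
    using \<open>a < c\<close> \<open>c < b\<close> by (cases a rule: ennreal_cases; cases c rule: ennreal_cases) auto
  ultimately show ?thesis
    by (intro exI[of _ "c' - a'"]) (auto simp: ennreal_less_iff ennreal_plus[symmetric])
qed

lemma gap_le_gap_image_add:
  assumes "\<forall>y\<in>F. dist y (f y) \<le> \<epsilon>"
  shows "gap dist F \<le> gap dist (f ` F) + ennreal (2 * \<epsilon>)"
proof -
  have "gap dist F - ennreal (2 * \<epsilon>) \<le> gap dist (f ` F)"
    unfolding gap_def[of _ "f ` F"]
  proof (rule INF_greatest)
    fix ab assume "ab \<in> {(a, b). a \<in> f ` F \<and> b \<in> f ` F \<and> a \<noteq> b}"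
    then obtain u v where uv: "u \<in> F" "v \<in> F" "ab = (f u, f v)" "f u \<noteq> f v"
      by auto
    have "dist u v \<le> dist u (f u) + dist (f u) (f v) + dist v (f v)"
      using dist_triangle[of u v "f u"] dist_triangle[of "f u" v "f v"] by (simp add: dist_commute)
    also have "\<dots> \<le> dist (f u) (f v) + 2 * \<epsilon>"
      using assms uv(1,2) by (smt (verit))
    finally have "ennreal (dist u v) \<le> ennreal (dist (f u) (f v)) + ennreal (2 * \<epsilon>)"
      using assms uv by (subst ennreal_plus[symmetric]) (auto intro: ennreal_leI order_trans[OF zero_le_dist])
    moreover have "gap dist F \<le> ennreal (dist u v)"
      using uv by (intro gap_le_dist) auto
    ultimately show "gap dist F - ennreal (2 * \<epsilon>) \<le> ennreal (dist (fst ab) (snd ab))"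
      using uv by (simp add: ennreal_minus_le_iff add.commute)
  qed
  then show ?thesis
    by (simp add: ennreal_minus_le_iff add.commute)
qed

lemma gap_le_max_gap_add:
  assumes "card F = Suc m" and near: "\<forall>y\<in>F. \<exists>z\<in>K. dist y z < \<epsilon>"
  shows "gap dist F \<le> max_gap m K + ennreal (2 * \<epsilon>)"
proof -
  obtain f where f: "\<forall>y\<in>F. f y \<in> K \<and> dist y (f y) < \<epsilon>"
    using near by metis
  show ?thesis
  proof (cases "inj_on f F")
    case True
    have "finite F"
      using \<open>card F = Suc m\<close> card.infinite by fastforce
    with True f \<open>card F = Suc m\<close> have "gap dist (f ` F) \<le> max_gap m K"
      unfolding max_gap_def by (intro SUP_upper) (auto simp: card_image)
    moreover have "gap dist F \<le> gap dist (f ` F) + ennreal (2 * \<epsilon>)"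
      using f by (intro gap_le_gap_image_add) (auto intro: less_imp_le)
    ultimately show ?thesis
      by (meson add_right_mono order_trans)
  next
    case False
    then obtain u v where uv: "u \<in> F" "v \<in> F" "u \<noteq> v" "f u = f v"
      by (auto simp: inj_on_def)
    have "dist u v \<le> dist u (f u) + dist v (f v)"
      using dist_triangle3[of u v "f u"] uv by (simp add: dist_commute)
    also have "\<dots> \<le> 2 * \<epsilon>"
      using f uv(1,2) by (smt (verit))
    finally have "gap dist F \<le> ennreal (2 * \<epsilon>)"
      using gap_le_dist[OF uv(1-3), of dist] by (meson ennreal_leI order_trans)
    then show ?thesis
      by (simp add: add_increasing)
  qed
qed

lemma max_gap_fibre_upper_semicontinuous:
  fixes E :: "('a::metric_space \<times> 'b::metric_space) set"
  assumes "compact E" and "max_gap m {y. (x, y) \<in> E} < s"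
  shows "\<exists>U. open U \<and> x \<in> U \<and> (\<forall>x'\<in>U. max_gap m {y. (x', y) \<in> E} < s)"
proof -
  define K where "K = {y. (x, y) \<in> E}"
  obtain e where "e > 0" and e: "max_gap m K + ennreal e < s"
    using ennreal_exists_add_less assms(2) unfolding K_def by blast
  define \<epsilon> where "\<epsilon> = e / 2"
  \<comment> \<open>C is the part of E at distance \<ge> \<epsilon> from {x} \<times> K; over every point outside its closed
    projection, the fibre of E lies in the \<epsilon>-neighbourhood of K\<close>
  define C where "C = E \<inter> (\<Inter>z\<in>K. {p. \<epsilon> \<le> dist (snd p) z})"
  have "compact C"
    unfolding C_def by (intro compact_Int_closed assms closed_INT ballI closed_Collect_le continuous_intros)
  then have "closed (fst ` C)"
    by (intro compact_imp_closed compact_continuous_image continuous_intros)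
  moreover have "x \<notin> fst ` C"
    using \<open>e > 0\<close> by (force simp: C_def K_def \<epsilon>_def)
  moreover have "max_gap m {y. (x', y) \<in> E} < s" if "x' \<notin> fst ` C" for x'
  proof -
    have "\<forall>y\<in>F. \<exists>z\<in>K. dist y z < \<epsilon>" if "F \<subseteq> {y. (x', y) \<in> E}" for F
      using \<open>x' \<notin> fst ` C\<close> that by (force simp: C_def not_le)
    then have "max_gap m {y. (x', y) \<in> E} \<le> max_gap m K + ennreal (2 * \<epsilon>)"
      unfolding max_gap_def[of m "{y. (x', y) \<in> E}"]
      by (intro SUP_least) (auto intro!: gap_le_max_gap_add)
    with e show ?thesis
      by (simp add: \<epsilon>_def)
  qed
  ultimately show ?thesis
    by (intro exI[of _ "- fst ` C"]) (auto simp: open_Compl)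
qed

lemma borel_measurable_max_gap_fibre:
  fixes E :: "('a::metric_space \<times> 'b::metric_space) set"
  assumes "compact E"
  shows "(\<lambda>x. max_gap m {y. (x, y) \<in> E}) \<in> borel_measurable borel"
proof (rule borel_measurableI_less)
  fix s
  have "open {x. max_gap m {y. (x, y) \<in> E} < s}"
  proof (subst open_subopen, intro ballI)
    fix x assume "x \<in> {x. max_gap m {y. (x, y) \<in> E} < s}"
    then obtain U where "open U" "x \<in> U" "\<forall>x'\<in>U. max_gap m {y. (x', y) \<in> E} < s"
      using max_gap_fibre_upper_semicontinuous[OF assms] by blast
    then show "\<exists>U. open U \<and> x \<in> U \<and> U \<subseteq> {x. max_gap m {y. (x, y) \<in> E} < s}"
      by blast
  qed
  then show "{x \<in> space borel. max_gap m {y. (x, y) \<in> E} < s} \<in> sets borel"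
    by simp
qed

lemma borel_ennreal_downward_closed:
  fixes D :: "ennreal set"
  assumes "\<And>a b. a \<le> b \<Longrightarrow> b \<in> D \<Longrightarrow> a \<in> D"
  shows "D \<in> sets borel"
proof (cases "Sup D \<in> D")
  case True
  then have "D = {..Sup D}"
    using assms by (auto intro: Sup_upper)
  then show ?thesis
    by (metis borel_closed closed_atMost)
next
  case False
  have "D = {..<Sup D}"
  proof
    show "D \<subseteq> {..<Sup D}"
    proof
      fix x assume "x \<in> D"
      then have "x \<le> Sup D" "x \<noteq> Sup D"
        using False by (auto intro: Sup_upper)
      then show "x \<in> {..<Sup D}"
        by simp
    qed
    show "{..<Sup D} \<subseteq> D"
    proof
      fix x assume "x \<in> {..<Sup D}"
      then obtain y where "y \<in> D" "x < y"
        by (auto simp: less_Sup_iff)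
      then show "x \<in> D"
        using assms[of x y] by simp
    qed
  qed
  then show ?thesis
    by (metis borel_open open_lessThan)
qed

definition box_inf :: "(real \<Rightarrow> real) \<Rightarrow> real \<Rightarrow> 'b::metric_space set \<Rightarrow> ennreal" where
  "box_inf g \<eta> K = (INF r\<in>{0<..<\<eta>}. cap dist r K * ennreal (g r))"

lemma box_inf_antimono: "\<eta>' \<le> \<eta> \<Longrightarrow> box_inf g \<eta> K \<le> box_inf g \<eta>' K"
  unfolding box_inf_def by (rule INF_superset_mono) auto

lemma lower_box0_eq_SUP_box_inf: "lower_box0 dist g K = (SUP n. box_inf g (1 / real (Suc n)) K)"
proof -
  have "lower_box0 dist g K = (SUP \<eta>\<in>{0<..}. box_inf g \<eta> K)"
    unfolding lower_box0_def Liminf_within box_inf_def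
    by (intro SUP_cong INF_cong) (auto simp: dist_real_def)
  also have "\<dots> = (SUP n. box_inf g (1 / real (Suc n)) K)"
  proof (rule antisym)
    show "(SUP \<eta>\<in>{0<..}. box_inf g \<eta> K) \<le> (SUP n. box_inf g (1 / real (Suc n)) K)"
    proof (rule SUP_least)
      fix \<eta> :: real assume "\<eta> \<in> {0<..}"
      then obtain n where "inverse (real (Suc n)) < \<eta>"
        using reals_Archimedean by auto
      then have "box_inf g \<eta> K \<le> box_inf g (1 / real (Suc n)) K"
        by (intro box_inf_antimono) (simp add: inverse_eq_divide)
      then show "box_inf g \<eta> K \<le> (SUP n. box_inf g (1 / real (Suc n)) K)"
        by (rule SUP_upper2[OF UNIV_I])
    qed
  qed (intro SUP_mono; auto)
  finally show ?thesis .
qed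

lemma borel_measurable_box_inf_fibre:
  fixes E :: "('a::metric_space \<times> 'b::metric_space) set"
  assumes "hausdorff_function g" "compact E"
  shows "(\<lambda>x. box_inf g \<eta> {y. (x, y) \<in> E}) \<in> borel_measurable borel"
proof (rule borel_measurableI_less)
  fix t :: ennreal
  define D where "D m = {s. \<exists>r. 0 < r \<and> r < \<eta> \<and> s \<le> ennreal r \<and> of_nat m * ennreal (g r) < t}" for m
  have "box_inf g \<eta> K < t \<longleftrightarrow> (\<exists>m. max_gap m K \<in> D m)" for K :: "'b set"
  proof -
    have "box_inf g \<eta> K < t \<longleftrightarrow> (\<exists>r\<in>{0<..<\<eta>}. cap dist r K * ennreal (g r) < t)"
      unfolding box_inf_def by (rule INF_less_iff)
    also have "\<dots> \<longleftrightarrow> (\<exists>r\<in>{0<..<\<eta>}. \<exists>m. max_gap m K \<le> ennreal r \<and> of_nat m * ennreal (g r) < t)"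
      using assms(1) by (intro bex_cong refl cap_mult_less_iff) (auto simp: hausdorff_function_def)
    also have "\<dots> \<longleftrightarrow> (\<exists>m. max_gap m K \<in> D m)"
      unfolding D_def Bex_def greaterThanLessThan_iff mem_Collect_eq by blast
    finally show ?thesis .
  qed
  then have "{x \<in> space borel. box_inf g \<eta> {y. (x, y) \<in> E} < t}
      = (\<Union>m. (\<lambda>x. max_gap m {y. (x, y) \<in> E}) -` D m \<inter> space borel)"
    by auto
  moreover have "D m \<in> sets borel" for m
    by (rule borel_ennreal_downward_closed) (auto simp: D_def intro: order_trans)
  ultimately show "{x \<in> space borel. box_inf g \<eta> {y. (x, y) \<in> E} < t} \<in> sets borel"
    using measurable_sets[OF borel_measurable_max_gap_fibre[OF assms(2)]] by auto
qed

section \<open>The integral inequality\<close>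

lemma cmult_emeasure_packing_measure_le:
  assumes "\<eta> > 0" and le: "\<forall>x\<in>A. c \<le> box_inf g \<eta> {y. (x, y) \<in> E}"
  shows "c * emeasure (packing_measure \<Delta> h) A \<le> weighted_packing_outer \<Delta> (fibre_weight g h E) A"
proof -
  have "\<forall>x\<in>A. \<forall>r. 0 < r \<longrightarrow> r < \<eta> \<longrightarrow> c * ennreal (h r) \<le> fibre_weight g h E x r"
  proof (intro ballI allI impI)
    fix x r assume "x \<in> A" "0 < r" "r < \<eta>"
    have "c \<le> box_inf g \<eta> {y. (x, y) \<in> E}"
      using le \<open>x \<in> A\<close> by blast
    also have "\<dots> \<le> cap dist r {y. (x, y) \<in> E} * ennreal (g r)"
      unfolding box_inf_def using \<open>0 < r\<close> \<open>r < \<eta>\<close> by (intro INF_lower) simp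
    finally show "c * ennreal (h r) \<le> fibre_weight g h E x r"
      unfolding fibre_weight_def by (rule mult_right_mono) simp
  qed
  then have "c * packing_outer dist \<Delta> h A \<le> weighted_packing_outer \<Delta> (fibre_weight g h E) A"
    by (rule packing_outer_cmult_le_weighted[OF \<open>\<eta> > 0\<close>])
  then show ?thesis
    by (meson emeasure_packing_measure_le mult_left_mono order_trans zero_le)
qed

lemma nn_integral_box_inf_fibre_le:
  fixes E :: "('a::metric_space \<times> 'b::metric_space) set"
  assumes "hausdorff_function g" "hausdorff_function h" "\<eta> > 0"
  shows "(\<integral>\<^sup>+ x. box_inf g \<eta> {y. (x, y) \<in> E} \<partial>packing_measure \<Delta> h) \<le> pre_packing max_dist \<Delta> (\<lambda>r. g r * h r) E"
  unfolding nn_integral_def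
proof (rule SUP_least)
  let ?M = "packing_measure \<Delta> h :: 'a measure"
  let ?W = "weighted_packing_outer \<Delta> (fibre_weight g h E)"
  fix s assume "s \<in> {s. simple_function ?M s \<and> s \<le> (\<lambda>x. box_inf g \<eta> {y. (x, y) \<in> E})}"
  then have s: "simple_function ?M s" and le: "\<And>x. s x \<le> box_inf g \<eta> {y. (x, y) \<in> E}"
    by (auto simp: le_fun_def)
  have "finite (range s)"
    using simple_functionD(1)[OF s] by (simp add: space_packing_measure)
  have level_borel: "s -` {c} \<in> sets borel" for c
    using simple_functionD(2)[OF s, of "{c}"] by (simp add: space_packing_measure sets_packing_measure)
  have level_le: "\<forall>x\<in>s -` {c}. c \<le> box_inf g \<eta> {y. (x, y) \<in> E}" for c
    using le by (metis vimage_singleton_eq)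
  have "integral\<^sup>S ?M s = (\<Sum>c\<in>range s. c * emeasure ?M (s -` {c}))"
    by (simp add: simple_integral_def space_packing_measure)
  also have "\<dots> \<le> (\<Sum>c\<in>range s. ?W (s -` {c}))"
    using level_le by (intro sum_mono cmult_emeasure_packing_measure_le[OF \<open>\<eta> > 0\<close>])
  also have "\<dots> = ?W (\<Union>c\<in>range s. s -` {c})"
    using level_borel by (intro weighted_packing_outer_finite_additive \<open>finite (range s)\<close>)
      (auto simp: disjoint_family_on_def)
  also have "\<dots> \<le> weighted_pre_packing \<Delta> (fibre_weight g h E) UNIV"
    by (intro order_trans[OF weighted_packing_outer_mono weighted_packing_outer_le_pre]) auto
  also have "\<dots> \<le> pre_packing max_dist \<Delta> (\<lambda>r. g r * h r) E"
    by (rule weighted_pre_packing_fibre_weight_le_pre_packing[OF assms(1,2)])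
  finally show "integral\<^sup>S ?M s \<le> pre_packing max_dist \<Delta> (\<lambda>r. g r * h r) E" .
qed

theorem lemma3p2:
  fixes E :: "('a::metric_space \<times> 'b::metric_space) set"
    and \<Delta> :: "real set" and g h :: "real \<Rightarrow> real"
  assumes "scale \<Delta>" and "hausdorff_function g" and "hausdorff_function h"
    and "compact E"
  shows "(\<lambda>x. lower_box0 dist g {y. (x, y) \<in> E}) \<in> borel_measurable borel \<and>
         (\<integral>\<^sup>+ x. lower_box0 dist g {y. (x, y) \<in> E} \<partial>(packing_measure \<Delta> h))
           \<le> pre_packing max_dist \<Delta> (\<lambda>r. g r * h r) E"
proof -
  let ?f = "\<lambda>n x. box_inf g (1 / real (Suc n)) {y. (x, y) \<in> E}"
  have lower_box: "(\<lambda>x. lower_box0 dist g {y. (x, y) \<in> E}) = (\<lambda>x. SUP n. ?f n x)"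
    by (simp add: lower_box0_eq_SUP_box_inf)
  have f_borel: "?f n \<in> borel_measurable borel" for n
    using borel_measurable_box_inf_fibre[OF assms(2,4)] .
  have "incseq ?f"
    by (intro incseq_SucI le_funI box_inf_antimono) (simp add: frac_le)
  have "(\<integral>\<^sup>+ x. lower_box0 dist g {y. (x, y) \<in> E} \<partial>packing_measure \<Delta> h)
      = (SUP n. integral\<^sup>N (packing_measure \<Delta> h) (?f n))"
    unfolding lower_box using f_borel
    by (intro nn_integral_monotone_convergence_SUP[OF \<open>incseq ?f\<close>])
       (subst measurable_cong_sets[OF sets_packing_measure refl])
  also have "\<dots> \<le> pre_packing max_dist \<Delta> (\<lambda>r. g r * h r) E"
    using assms(2,3) by (intro SUP_least nn_integral_box_inf_fibre_le) simp_all
  finally show ?thesis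
    unfolding lower_box using f_borel by simp
qed

end
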